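(* Let $S$ be a semigroup, let $T$ be a subsemigroup of $S$ generated by a finite set $A$, and let $s\in S$. Suppose that $|\langle T,s\rangle\setminus T|=n$ is finite. Then there exists $N\in\mathbb{N}$ such that for all $b_1,\ldots,b_n\in A\cup\{s\}$, if the elements $s, sb_1, sb_1b_2,\ldots, sb_1\cdots b_n$ are pairwise distinct, then there exist $0\le i\le n$, $1\le j\le N$ and $a_1,\ldots,a_j\in A$ such that $sb_1\cdots b_i=a_1\cdots a_j$ (where for $i=0$ the left-hand side is $s$).
   Context: $\langle T,s\rangle$ denotes the subsemigroup of $S$ generated by $T\cup\{s\}$. *)

theory Defs
  imports Main
begin

inductive_set gen_sg :: "'a::semigroup_mult set \<Rightarrow> 'a set" for X :: "'a set" where
  base: "x \<in> X \<Longrightarrow> x \<in> gen_sg X"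
| mult: "x \<in> gen_sg X \<Longrightarrow> y \<in> gen_sg X \<Longrightarrow> x * y \<in> gen_sg X"

text \<open>Product x1 * x2 * ... * xk of a nonempty list (left-associated).\<close>
definition lprod :: "'a::semigroup_mult list \<Rightarrow> 'a" where
  "lprod xs = foldl (*) (hd xs) (tl xs)"

end

theory Submission
  imports Defs
begin

(* Write G = <T,s> with T = <A>, and let s b_1...b_i (0 <= i <= n) be the n+1
   prefix products of a word b_1...b_n over A u {s}.  Every prefix product lies in G; if they are
   pairwise distinct, they cannot all avoid T, because G - T has only n elements (pigeonhole).
   Hence some prefix product lies in T = <A>, i.e. it is a product a_1...a_j of letters of A.
   The length j depends on the word, but there are only finitely many words of length n over the
   finite alphabet A u {s}, so the maximum of these lengths is a uniform bound N. *)

lemma foldl_mult_seed: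
  "foldl (*) ((x::'a::semigroup_mult) * y) ys = x * foldl (*) y ys"
  by (induction ys arbitrary: y) (auto simp: mult.assoc)

lemma lprod_append:
  assumes "xs \<noteq> []" "ys \<noteq> []"
  shows "lprod (xs @ ys) = lprod xs * lprod (ys::'a::semigroup_mult list)"
proof -
  obtain x xs' where "xs = x # xs'" using assms by (cases xs) auto
  moreover obtain y ys' where "ys = y # ys'" using assms by (cases ys) auto
  ultimately show ?thesis unfolding lprod_def by (simp add: foldl_mult_seed)
qed

lemma gen_sg_obtain_word:
  assumes "x \<in> gen_sg A"
  obtains as where "as \<noteq> []" "set as \<subseteq> A" "x = lprod as"
proof -
  from assms have "\<exists>as. as \<noteq> [] \<and> set as \<subseteq> A \<and> x = lprod as"
  proof (induction rule: gen_sg.induct)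
    case (base x)
    show ?case by (intro exI[of _ "[x]"]) (auto simp: lprod_def base)
  next
    case (mult x y)
    then obtain xs ys where "xs \<noteq> []" "set xs \<subseteq> A" "lprod xs = x"
      and "ys \<noteq> []" "set ys \<subseteq> A" "lprod ys = y" by blast
    then show ?case by (intro exI[of _ "xs @ ys"]) (auto simp: lprod_append)
  qed
  with that show ?thesis by blast
qed

lemma foldl_mult_in_gen_sg:
  "x \<in> gen_sg X \<Longrightarrow> set bs \<subseteq> gen_sg X \<Longrightarrow> foldl (*) x bs \<in> gen_sg X"
  by (induction bs arbitrary: x) (auto intro: gen_sg.mult)

lemma distinct_list_meets:
  assumes "distinct xs" "set xs \<subseteq> G" "finite (G - T)" "card (G - T) < length xs"
  shows "\<exists>x\<in>set xs. x \<in> T"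
proof (rule ccontr)
  assume "\<not> ?thesis"
  with assms(2) have "set xs \<subseteq> G - T" by blast
  from card_mono[OF assms(3) this] have "length xs \<le> card (G - T)"
    using distinct_card[OF assms(1)] by simp
  with assms(4) show False by simp
qed

lemma prefix_product_in_gen_sg:
  fixes A :: "'a::semigroup_mult set"
  assumes "finite (gen_sg (insert s (gen_sg A)) - gen_sg A)"
    and "card (gen_sg (insert s (gen_sg A)) - gen_sg A) = n"
    and "length bs = n" "set bs \<subseteq> insert s A"
    and "distinct (map (\<lambda>i. foldl (*) s (take i bs)) [0..<n+1])"
  shows "\<exists>i\<le>n. foldl (*) s (take i bs) \<in> gen_sg A"
proof -
  let ?G = "gen_sg (insert s (gen_sg A))"
  have s_in_G: "s \<in> ?G" by (auto intro: gen_sg.base)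
  have "set bs \<subseteq> ?G" using assms(4) by (auto intro: gen_sg.base)
  then have "foldl (*) s (take i bs) \<in> ?G" for i
    using set_take_subset[of i bs] foldl_mult_in_gen_sg[OF s_in_G] by blast
  then have "set (map (\<lambda>i. foldl (*) s (take i bs)) [0..<n+1]) \<subseteq> ?G" by auto
  from distinct_list_meets[OF assms(5) this assms(1)]
  obtain i where "i < n + 1" "foldl (*) s (take i bs) \<in> gen_sg A"
    using assms(2) by (auto simp del: upt_Suc)
  then show ?thesis by (auto simp: less_Suc_eq_le)
qed

corollary prefix_product_is_word:
  fixes A :: "'a::semigroup_mult set"
  assumes "finite (gen_sg (insert s (gen_sg A)) - gen_sg A)"
    and "card (gen_sg (insert s (gen_sg A)) - gen_sg A) = n"
    and "length bs = n" "set bs \<subseteq> insert s A"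
    and "distinct (map (\<lambda>i. foldl (*) s (take i bs)) [0..<n+1])"
  obtains i as where "i \<le> n" "as \<noteq> []" "set as \<subseteq> A" "foldl (*) s (take i bs) = lprod as"
proof -
  from prefix_product_in_gen_sg[OF assms]
  obtain i where i: "i \<le> n" "foldl (*) s (take i bs) \<in> gen_sg A" by blast
  from i(2) obtain as where "as \<noteq> []" "set as \<subseteq> A" "foldl (*) s (take i bs) = lprod as"
    by (rule gen_sg_obtain_word)
  with i(1) show ?thesis by (rule that)
qed

lemma finite_uniform_bound:
  assumes "finite B" "\<And>b. b \<in> B \<Longrightarrow> \<exists>k::nat. P b k"
  shows "\<exists>N. \<forall>b\<in>B. \<exists>k\<le>N. P b k"
proof -
  from assms(2) obtain g where g: "\<And>b. b \<in> B \<Longrightarrow> P b (g b)" by metis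
  have "g b \<le> Max (insert 0 (g ` B))" if "b \<in> B" for b
    using assms(1) that by simp
  with g show ?thesis by blast
qed

theorem mainTheorem4:
  fixes A :: "'a::semigroup_mult set" and s :: 'a and n :: nat
  assumes "finite A"
    and "finite (gen_sg (insert s (gen_sg A)) - gen_sg A)"
    and "card (gen_sg (insert s (gen_sg A)) - gen_sg A) = n"
  shows "\<exists>N::nat. \<forall>bs :: 'a list. length bs = n \<and> set bs \<subseteq> insert s A \<and>
            distinct (map (\<lambda>i. foldl (*) s (take i bs)) [0..<n+1]) \<longrightarrow>
            (\<exists>i\<le>n. \<exists>as :: 'a list. 1 \<le> length as \<and> length as \<le> N \<and> set as \<subseteq> A \<and>
               foldl (*) s (take i bs) = lprod as)"
proof -
  define B where "B = {bs. set bs \<subseteq> insert s A \<and> length bs = n \<and>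
            distinct (map (\<lambda>i. foldl (*) s (take i bs)) [0..<n+1])}"
  define W where "W bs k \<longleftrightarrow> (\<exists>i\<le>n. \<exists>as. length as = k \<and> as \<noteq> [] \<and> set as \<subseteq> A \<and>
                    foldl (*) s (take i bs) = lprod as)" for bs k
  have "finite B"
  proof (rule finite_subset)
    show "B \<subseteq> {bs. set bs \<subseteq> insert s A \<and> length bs = n}" unfolding B_def by blast
    show "finite {bs. set bs \<subseteq> insert s A \<and> length bs = n}"
      using assms(1) by (simp add: finite_lists_length_eq)
  qed
  moreover have "\<exists>k. W bs k" if "bs \<in> B" for bs
  proof -
    from that have "length bs = n" "set bs \<subseteq> insert s A"
      "distinct (map (\<lambda>i. foldl (*) s (take i bs)) [0..<n+1])"
      unfolding B_def by (simp_all del: upt_Suc)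
    then obtain i as where "i \<le> n" "as \<noteq> []" "set as \<subseteq> A"
      "foldl (*) s (take i bs) = lprod as" by (rule prefix_product_is_word[OF assms(2,3)])
    then have "W bs (length as)" unfolding W_def by blast
    then show ?thesis ..
  qed
  ultimately obtain N where N: "\<And>bs. bs \<in> B \<Longrightarrow> \<exists>k\<le>N. W bs k"
    using finite_uniform_bound[of B W] by blast
  show ?thesis
  proof (rule exI[of _ N], intro allI impI)
    fix bs assume "length bs = n \<and> set bs \<subseteq> insert s A \<and>
            distinct (map (\<lambda>i. foldl (*) s (take i bs)) [0..<n+1])"
    then have "bs \<in> B" unfolding B_def by blast
    then obtain k where "k \<le> N" "W bs k" using N by blast
    then show "\<exists>i\<le>n. \<exists>as. 1 \<le> length as \<and> length as \<le> N \<and> set as \<subseteq> A \<and>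
               foldl (*) s (take i bs) = lprod as"
      unfolding W_def by (auto simp: Suc_le_eq)
  qed
qed

end
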